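(* Let $A$ be a complete noetherian local ring that is not regular. Then any minimal Cohen presentation $\pi\colon Q\to A$ is basically regular and not flat.
   Context: All rings are commutative and noetherian with identity. A Cohen presentation of a complete local ring $A$ is a surjective ring homomorphism $\pi\colon (Q,r)\to A$ with $Q$ a complete regular local ring; it is minimal if $\ker(\pi)\subseteq r^2$. A local homomorphism $\varphi\colon(A,m)\to(B,n)$ ($\varphi(m)\subseteq n$) is basically regular if for every minimal basis (minimal generating set) $x_1,\dots,x_r$ of $m$, the elements $\varphi(x_1),\dots,\varphi(x_r)$ are part of a minimal basis of $n$ (vacuously true if $A$ is a field). *)

theory Defs
  imports "HOL-Algebra.Algebra" "HOL-Library.Extended_Nat"
begin

definition local_ring :: "('a, 'b) ring_scheme \<Rightarrow> bool" where
  "local_ring R \<longleftrightarrow> cring R \<and> noetherian_ring R \<and> (\<exists>!m. maximalideal m R)"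

definition max_ideal :: "('a, 'b) ring_scheme \<Rightarrow> 'a set" where
  "max_ideal R = (THE m. maximalideal m R)"

fun ideal_pow :: "('a, 'b) ring_scheme \<Rightarrow> 'a set \<Rightarrow> nat \<Rightarrow> 'a set" where
  "ideal_pow R I 0 = carrier R"
| "ideal_pow R I (Suc n) = ideal_prod R (ideal_pow R I n) I"

definition madic_complete :: "('a, 'b) ring_scheme \<Rightarrow> bool" where
  "madic_complete R \<longleftrightarrow>
     (\<Inter>k. ideal_pow R (max_ideal R) k) = {\<zero>\<^bsub>R\<^esub>} \<and>
     (\<forall>x :: nat \<Rightarrow> 'a. range x \<subseteq> carrier R \<and>
        (\<forall>k. \<exists>N. \<forall>i\<ge>N. \<forall>j\<ge>N. x i \<ominus>\<^bsub>R\<^esub> x j \<in> ideal_pow R (max_ideal R) k)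
        \<longrightarrow> (\<exists>l\<in>carrier R. \<forall>k. \<exists>N. \<forall>i\<ge>N. x i \<ominus>\<^bsub>R\<^esub> l \<in> ideal_pow R (max_ideal R) k))"

definition complete_local_ring :: "('a, 'b) ring_scheme \<Rightarrow> bool" where
  "complete_local_ring R \<longleftrightarrow> local_ring R \<and> madic_complete R"

definition krull_dim :: "('a, 'b) ring_scheme \<Rightarrow> enat" where
  "krull_dim R = Sup {enat n | n. \<exists>P :: nat \<Rightarrow> 'a set.
      (\<forall>i\<le>n. primeideal (P i) R) \<and> (\<forall>i<n. P i \<subset> P (Suc i))}"

definition generates :: "('a, 'b) ring_scheme \<Rightarrow> 'a set \<Rightarrow> 'a set \<Rightarrow> bool" where
  "generates R S I \<longleftrightarrow> finite S \<and> S \<subseteq> carrier R \<and> Idl\<^bsub>R\<^esub> S = I"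

definition emb_dim :: "('a, 'b) ring_scheme \<Rightarrow> nat" where
  "emb_dim R = (LEAST n. \<exists>S. generates R S (max_ideal R) \<and> card S = n)"

definition regular_local_ring :: "('a, 'b) ring_scheme \<Rightarrow> bool" where
  "regular_local_ring R \<longleftrightarrow> local_ring R \<and> krull_dim R = enat (emb_dim R)"

definition minimal_basis :: "('a, 'b) ring_scheme \<Rightarrow> 'a set \<Rightarrow> 'a set \<Rightarrow> bool" where
  "minimal_basis R I S \<longleftrightarrow> generates R S I \<and> (\<forall>T. T \<subset> S \<longrightarrow> Idl\<^bsub>R\<^esub> T \<noteq> I)"

definition basically_regular ::
  "('a, 'c) ring_scheme \<Rightarrow> ('b, 'd) ring_scheme \<Rightarrow> ('a \<Rightarrow> 'b) \<Rightarrow> bool" where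
  "basically_regular A B \<phi> \<longleftrightarrow>
     local_ring A \<and> local_ring B \<and> \<phi> \<in> ring_hom A B \<and> \<phi> ` max_ideal A \<subseteq> max_ideal B \<and>
     (\<forall>S. minimal_basis A (max_ideal A) S \<longrightarrow>
        inj_on \<phi> S \<and> (\<exists>T. \<phi> ` S \<subseteq> T \<and> minimal_basis B (max_ideal B) T))"

definition cohen_presentation ::
  "('a, 'c) ring_scheme \<Rightarrow> ('b, 'd) ring_scheme \<Rightarrow> ('a \<Rightarrow> 'b) \<Rightarrow> bool" where
  "cohen_presentation Q A \<pi> \<longleftrightarrow>
     complete_local_ring Q \<and> regular_local_ring Q \<and> \<pi> \<in> ring_hom Q A \<and> \<pi> ` carrier Q = carrier A"

definition minimal_cohen_presentation ::
  "('a, 'c) ring_scheme \<Rightarrow> ('b, 'd) ring_scheme \<Rightarrow> ('a \<Rightarrow> 'b) \<Rightarrow> bool" where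
  "minimal_cohen_presentation Q A \<pi> \<longleftrightarrow>
     cohen_presentation Q A \<pi> \<and> a_kernel Q A \<pi> \<subseteq> ideal_prod Q (max_ideal Q) (max_ideal Q)"

text \<open>Flatness of B as a module over A via \<phi> (equational criterion: every linear
  relation in B with coefficients in A is trivial).\<close>

definition flat_hom ::
  "('a, 'c) ring_scheme \<Rightarrow> ('b, 'd) ring_scheme \<Rightarrow> ('a \<Rightarrow> 'b) \<Rightarrow> bool" where
  "flat_hom A B \<phi> \<longleftrightarrow>
     (\<forall>n (f :: nat \<Rightarrow> 'a) (x :: nat \<Rightarrow> 'b).
        f ` {..<n} \<subseteq> carrier A \<and> x ` {..<n} \<subseteq> carrier B \<and>
        (\<Oplus>\<^bsub>B\<^esub> i\<in>{..<n}. \<phi> (f i) \<otimes>\<^bsub>B\<^esub> x i) = \<zero>\<^bsub>B\<^esub> \<longrightarrow>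
        (\<exists>m (a :: nat \<Rightarrow> nat \<Rightarrow> 'a) (y :: nat \<Rightarrow> 'b).
           y ` {..<m} \<subseteq> carrier B \<and>
           (\<forall>i<n. \<forall>j<m. a i j \<in> carrier A) \<and>
           (\<forall>i<n. x i = (\<Oplus>\<^bsub>B\<^esub> j\<in>{..<m}. \<phi> (a i j) \<otimes>\<^bsub>B\<^esub> y j)) \<and>
           (\<forall>j<m. (\<Oplus>\<^bsub>A\<^esub> i\<in>{..<n}. f i \<otimes>\<^bsub>A\<^esub> a i j) = \<zero>\<^bsub>A\<^esub>)))"

end

theory Submission
  imports Defs
begin

text \<open>Because the kernel of \<open>\<pi>\<close> lies in \<open>r\<^sup>2\<close>, the map \<open>\<pi>\<close> cannot make an element of a
  minimal basis of \<open>r\<close> a combination of the other basis elements: such a relation would hold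
  modulo \<open>r\<^sup>2\<close> already in \<open>Q\<close>, which Nakayama's lemma rules out. So \<open>\<pi>\<close> maps minimal
  bases of \<open>r\<close> bijectively onto minimal bases of the maximal ideal of \<open>A\<close>.

  For flatness, apply the equational criterion to the one-term relation \<open>\<pi>(q) \<cdot> 1 = 0\<close> for
  \<open>q \<in> ker \<pi>\<close>: it writes \<open>1 = \<Sum> \<pi>(a\<^sub>j) y\<^sub>j\<close> with \<open>q a\<^sub>j = 0\<close>, and since \<open>\<pi>\<close> is local some
  \<open>a\<^sub>j\<close> is a unit, so \<open>q = 0\<close>. Thus a flat \<open>\<pi>\<close> would be an isomorphism, and \<open>A\<close> would be
  regular like \<open>Q\<close>.\<close>

section \<open>Local rings\<close>

lemma local_ring_cring: "local_ring R \<Longrightarrow> cring R"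
  by (simp add: local_ring_def)

lemma maximalideal_max_ideal:
  assumes "local_ring R"
  shows "maximalideal (max_ideal R) R"
proof -
  from assms have "\<exists>!M. maximalideal M R" by (simp add: local_ring_def)
  then show ?thesis unfolding max_ideal_def by (rule theI')
qed

lemma max_ideal_unique:
  assumes "local_ring R" "maximalideal M R"
  shows "M = max_ideal R"
proof -
  from assms(1) have "\<exists>!M. maximalideal M R" by (simp add: local_ring_def)
  then show ?thesis unfolding max_ideal_def using assms(2) by (rule the1_equality[symmetric])
qed

lemma ideal_max_ideal: "local_ring R \<Longrightarrow> ideal (max_ideal R) R"
  by (rule maximalideal.axioms(1)[OF maximalideal_max_ideal])

lemma max_ideal_subset_carrier: "local_ring R \<Longrightarrow> max_ideal R \<subseteq> carrier R"
  using ideal.Icarr[OF ideal_max_ideal] by (rule subsetI)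

lemma one_not_in_max_ideal:
  assumes "local_ring R"
  shows "\<one>\<^bsub>R\<^esub> \<notin> max_ideal R"
proof
  assume "\<one>\<^bsub>R\<^esub> \<in> max_ideal R"
  then have "max_ideal R = carrier R"
    using ideal.one_imp_carrier[OF ideal_max_ideal[OF assms]] by blast
  with maximalideal.I_notcarr[OF maximalideal_max_ideal[OF assms]] show False by simp
qed

lemma proper_ideal_subset_max_ideal:
  fixes R (structure)
  assumes local: "local_ring R" and J: "ideal J R" "\<one> \<notin> J"
  shows "J \<subseteq> max_ideal R"
proof -
  interpret cring R using local by (rule local_ring_cring)
  define F where "F = {K. ideal K R \<and> J \<subseteq> K \<and> \<one> \<notin> K}"
  have "\<exists>M\<in>F. \<forall>K\<in>F. M \<subseteq> K \<longrightarrow> K = M"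
  proof (rule subset_Zorn_nonempty)
    show "F \<noteq> {}" using J unfolding F_def by blast
  next
    fix C assume C: "C \<noteq> {}" "subset.chain F C"
    then have "subset.chain {I. ideal I R} C" unfolding F_def pred_on.chain_def by blast
    with C(1) have "ideal (\<Union>C) R" using chain_Union_is_ideal[of C] by simp
    with C show "\<Union>C \<in> F" unfolding F_def pred_on.chain_def by blast
  qed
  then obtain M where M: "M \<in> F" and M_max: "\<And>K. K \<in> F \<Longrightarrow> M \<subseteq> K \<Longrightarrow> K = M" by blast
  have "maximalideal M R"
  proof (rule maximalidealI)
    show "ideal M R" "carrier R \<noteq> M" using M unfolding F_def by auto
    fix K assume K: "ideal K R" "M \<subseteq> K" "K \<subseteq> carrier R"
    show "K = M \<or> K = carrier R"
    proof (cases "\<one> \<in> K")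
      case True
      then show ?thesis using ideal.one_imp_carrier[OF K(1)] by simp
    next
      case False
      with K M have "K \<in> F" unfolding F_def by blast
      with M_max K(2) show ?thesis by simp
    qed
  qed
  with local have "M = max_ideal R" by (rule max_ideal_unique)
  with M show ?thesis unfolding F_def by blast
qed

lemma Units_if_not_in_max_ideal:
  fixes R (structure)
  assumes local: "local_ring R" and x: "x \<in> carrier R" "x \<notin> max_ideal R"
  shows "x \<in> Units R"
proof -
  interpret cring R using local by (rule local_ring_cring)
  have "\<not> PIdl x \<subseteq> max_ideal R" using cgenideal_self[OF x(1)] x(2) by blast
  then have "\<one> \<in> PIdl x"
    using proper_ideal_subset_max_ideal[OF local cgenideal_ideal[OF x(1)]] by blast
  then obtain y where "y \<in> carrier R" "\<one> = y \<otimes> x" unfolding cgenideal_def by blast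
  then show ?thesis using x(1) m_comm unfolding Units_def by auto
qed

section \<open>Surjective ring homomorphisms\<close>

lemma (in ring_hom_ring) ideal_img_if_surj:
  assumes surj: "h ` carrier R = carrier S" and I: "ideal I R"
  shows "ideal (h ` I) S"
proof (rule idealI)
  show "ring S" by (rule S.ring_axioms)
  show "subgroup (h ` I) (add_monoid S)"
    using img_is_add_subgroup[OF additive_subgroup.a_subgroup[OF ideal.axioms(1)[OF I]]] .
next
  fix a x assume "a \<in> h ` I" "x \<in> carrier S"
  then obtain i r where ir: "i \<in> I" "a = h i" "r \<in> carrier R" "x = h r"
    using surj by blast
  then have i: "i \<in> carrier R" using ideal.Icarr[OF I] by blast
  have "x \<otimes>\<^bsub>S\<^esub> a = h (r \<otimes> i)" "a \<otimes>\<^bsub>S\<^esub> x = h (i \<otimes> r)" using ir i by simp_all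
  moreover have "r \<otimes> i \<in> I" "i \<otimes> r \<in> I"
    using ideal.I_l_closed[OF I ir(1,3)] ideal.I_r_closed[OF I ir(1,3)] by simp_all
  ultimately show "x \<otimes>\<^bsub>S\<^esub> a \<in> h ` I" "a \<otimes>\<^bsub>S\<^esub> x \<in> h ` I" by simp_all
qed

lemma (in ring_hom_ring) genideal_img_if_surj:
  assumes surj: "h ` carrier R = carrier S" and G: "G \<subseteq> carrier R"
  shows "Idl\<^bsub>S\<^esub> (h ` G) = h ` (Idl\<^bsub>R\<^esub> G)"
proof
  have "ideal (h ` (Idl\<^bsub>R\<^esub> G)) S" using ideal_img_if_surj[OF surj R.genideal_ideal[OF G]] .
  moreover have "h ` G \<subseteq> h ` (Idl\<^bsub>R\<^esub> G)" using R.genideal_self[OF G] by (rule image_mono)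
  ultimately show "Idl\<^bsub>S\<^esub> (h ` G) \<subseteq> h ` (Idl\<^bsub>R\<^esub> G)" by (rule S.genideal_minimal)
next
  have hG: "h ` G \<subseteq> carrier S" using G by auto
  have "ideal {r \<in> carrier R. h r \<in> Idl\<^bsub>S\<^esub> (h ` G)} R"
    using ideal_vimage[OF S.genideal_ideal[OF hG]] .
  moreover have "G \<subseteq> {r \<in> carrier R. h r \<in> Idl\<^bsub>S\<^esub> (h ` G)}"
    using G S.genideal_self[OF hG] by blast
  ultimately have "Idl\<^bsub>R\<^esub> G \<subseteq> {r \<in> carrier R. h r \<in> Idl\<^bsub>S\<^esub> (h ` G)}"
    by (rule R.genideal_minimal)
  then show "h ` (Idl\<^bsub>R\<^esub> G) \<subseteq> Idl\<^bsub>S\<^esub> (h ` G)" by blast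
qed

lemma (in ring_hom_ring) primeideal_vimage:
  assumes "cring R" and P: "primeideal P S"
  shows "primeideal {r \<in> carrier R. h r \<in> P} R"
proof (rule primeidealI)
  show "ideal {r \<in> carrier R. h r \<in> P} R" using ideal_vimage[OF primeideal.axioms(1)[OF P]] .
  show "cring R" by fact
  have "\<one>\<^bsub>S\<^esub> \<notin> P"
    using ideal.one_imp_carrier[OF primeideal.axioms(1)[OF P]] primeideal.I_notcarr[OF P] by blast
  then show "carrier R \<noteq> {r \<in> carrier R. h r \<in> P}" by force
next
  fix a b assume "a \<in> carrier R" "b \<in> carrier R" "a \<otimes> b \<in> {r \<in> carrier R. h r \<in> P}"
  then show "a \<in> {r \<in> carrier R. h r \<in> P} \<or> b \<in> {r \<in> carrier R. h r \<in> P}"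
    using primeideal.I_prime[OF P] by simp
qed

lemma ring_hom_ring_if_local_rings:
  "local_ring R \<Longrightarrow> local_ring S \<Longrightarrow> h \<in> ring_hom R S \<Longrightarrow> ring_hom_ring R S h"
  by (intro ring_hom_ringI2 cring.axioms(1) local_ring_cring)

lemma img_max_ideal_if_surj:
  fixes R :: "('a, 'c) ring_scheme" and S :: "('b, 'd) ring_scheme"
  assumes local: "local_ring R" "local_ring S" and h: "ring_hom_ring R S h"
    and surj: "h ` carrier R = carrier S"
  shows "h ` max_ideal R = max_ideal S"
proof -
  interpret ring_hom_ring R S h by (rule h)
  define P where "P = {r \<in> carrier R. h r \<in> max_ideal S}"
  have "ideal P R" unfolding P_def using ideal_vimage[OF ideal_max_ideal[OF local(2)]] .
  moreover have "\<one>\<^bsub>R\<^esub> \<notin> P" unfolding P_def using one_not_in_max_ideal[OF local(2)] by simp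
  ultimately have P_sub: "P \<subseteq> max_ideal R" by (rule proper_ideal_subset_max_ideal[OF local(1)])
  have "\<one>\<^bsub>S\<^esub> \<notin> h ` max_ideal R"
  proof
    assume "\<one>\<^bsub>S\<^esub> \<in> h ` max_ideal R"
    then obtain x where x: "x \<in> max_ideal R" "\<one>\<^bsub>S\<^esub> = h x" by (rule imageE)
    then have x_carr: "x \<in> carrier R" using max_ideal_subset_carrier[OF local(1)] by blast
    with x(2)[symmetric] have "h (\<one>\<^bsub>R\<^esub> \<ominus>\<^bsub>R\<^esub> x) = \<zero>\<^bsub>S\<^esub>" by (simp add: a_minus_def S.r_neg)
    then have "\<one>\<^bsub>R\<^esub> \<ominus>\<^bsub>R\<^esub> x \<in> max_ideal R"
      using P_sub x_carr additive_subgroup.zero_closed[OF ideal.axioms(1)[OF ideal_max_ideal[OF local(2)]]]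
      unfolding P_def by auto
    then have "(\<one>\<^bsub>R\<^esub> \<ominus>\<^bsub>R\<^esub> x) \<oplus>\<^bsub>R\<^esub> x \<in> max_ideal R"
      using additive_subgroup.a_closed[OF ideal.axioms(1)[OF ideal_max_ideal[OF local(1)]] _ x(1)] by blast
    moreover have "(\<one>\<^bsub>R\<^esub> \<ominus>\<^bsub>R\<^esub> x) \<oplus>\<^bsub>R\<^esub> x = \<one>\<^bsub>R\<^esub>" using x_carr by algebra
    ultimately show False using one_not_in_max_ideal[OF local(1)] by simp
  qed
  then have "h ` max_ideal R \<subseteq> max_ideal S"
    using proper_ideal_subset_max_ideal[OF local(2) ideal_img_if_surj[OF surj ideal_max_ideal[OF local(1)]]]
    by blast
  moreover have "max_ideal S \<subseteq> h ` max_ideal R"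
  proof
    fix y assume y: "y \<in> max_ideal S"
    then obtain x where "x \<in> carrier R" "y = h x"
      using surj max_ideal_subset_carrier[OF local(2)] by blast
    with y P_sub show "y \<in> h ` max_ideal R" unfolding P_def by blast
  qed
  ultimately show ?thesis by (rule subset_antisym)
qed

lemma krull_dim_le_if_surj:
  fixes R :: "('a, 'c) ring_scheme" and S :: "('b, 'd) ring_scheme"
  assumes "cring R" and h: "ring_hom_ring R S h" and surj: "h ` carrier R = carrier S"
  shows "krull_dim S \<le> krull_dim R"
  unfolding krull_dim_def
proof (rule Sup_subset_mono, rule subsetI)
  interpret ring_hom_ring R S h by (rule h)
  fix e assume "e \<in> {enat n |n. \<exists>P :: nat \<Rightarrow> 'b set.
    (\<forall>i\<le>n. primeideal (P i) S) \<and> (\<forall>i<n. P i \<subset> P (Suc i))}"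
  then obtain n and P :: "nat \<Rightarrow> 'b set" where e: "e = enat n"
    and prime: "\<forall>i\<le>n. primeideal (P i) S" and chain: "\<forall>i<n. P i \<subset> P (Suc i)" by blast
  define P' where "P' i = {r \<in> carrier R. h r \<in> P i}" for i
  have "\<forall>i\<le>n. primeideal (P' i) R"
    unfolding P'_def using primeideal_vimage[OF \<open>cring R\<close>] prime by blast
  moreover have "P' i \<subset> P' (Suc i)" if "i < n" for i
  proof -
    obtain y where y: "y \<in> P (Suc i)" "y \<notin> P i" using chain \<open>i < n\<close> by blast
    have "P (Suc i) \<subseteq> carrier S"
      using prime \<open>i < n\<close> ideal.Icarr[OF primeideal.axioms(1)] by (metis Suc_leI subsetI)
    with y(1) surj obtain x where "x \<in> carrier R" "y = h x" by blast
    with y chain \<open>i < n\<close> show ?thesis unfolding P'_def by blast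
  qed
  ultimately show "e \<in> {enat n |n. \<exists>P :: nat \<Rightarrow> 'a set.
    (\<forall>i\<le>n. primeideal (P i) R) \<and> (\<forall>i<n. P i \<subset> P (Suc i))}"
    using e by blast
qed

lemma emb_dim_le_if_surj:
  fixes R :: "('a, 'c) ring_scheme" and S :: "('b, 'd) ring_scheme"
  assumes local: "local_ring R" "local_ring S" and h: "ring_hom_ring R S h"
    and surj: "h ` carrier R = carrier S"
  shows "emb_dim S \<le> emb_dim R"
proof -
  interpret ring_hom_ring R S h by (rule h)
  obtain G0 where "G0 \<subseteq> carrier R" "finite G0" "max_ideal R = Idl\<^bsub>R\<^esub> G0"
    using noetherian_ring.finetely_gen[OF _ ideal_max_ideal[OF local(1)]] local(1)
    unfolding local_ring_def by blast
  then have "\<exists>n G. generates R G (max_ideal R) \<and> card G = n" unfolding generates_def by auto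
  then have "\<exists>G. generates R G (max_ideal R) \<and> card G = emb_dim R"
    unfolding emb_dim_def by (rule LeastI_ex)
  then obtain G where G: "generates R G (max_ideal R)" "card G = emb_dim R" by blast
  then have "generates S (h ` G) (max_ideal S)"
    using genideal_img_if_surj[OF surj] img_max_ideal_if_surj[OF local h surj]
    unfolding generates_def by auto
  then have "emb_dim S \<le> card (h ` G)" unfolding emb_dim_def by (blast intro: Least_le)
  also have "\<dots> \<le> emb_dim R" using card_image_le G unfolding generates_def by metis
  finally show ?thesis .
qed

lemma regular_local_ring_if_ring_iso:
  fixes R :: "('a, 'c) ring_scheme" and S :: "('b, 'd) ring_scheme"
  assumes local: "local_ring R" "local_ring S" and iso: "h \<in> ring_iso R S"
    and regular: "regular_local_ring R"
  shows "regular_local_ring S"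
proof -
  have inv_iso: "inv_into (carrier R) h \<in> ring_iso S R"
    using ring_iso_set_sym[OF cring.axioms(1)[OF local_ring_cring[OF local(1)]] iso] .
  have h: "ring_hom_ring R S h" and h_surj: "h ` carrier R = carrier S"
    using ring_hom_ring_if_local_rings[OF local] iso
    unfolding ring_iso_def bij_betw_def by auto
  have g: "ring_hom_ring S R (inv_into (carrier R) h)"
    and g_surj: "inv_into (carrier R) h ` carrier S = carrier R"
    using ring_hom_ring_if_local_rings[OF local(2,1)] inv_iso
    unfolding ring_iso_def bij_betw_def by auto
  have "krull_dim S = krull_dim R"
    using krull_dim_le_if_surj[OF local_ring_cring[OF local(1)] h h_surj]
      krull_dim_le_if_surj[OF local_ring_cring[OF local(2)] g g_surj] by (rule antisym)
  moreover have "emb_dim S = emb_dim R"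
    using emb_dim_le_if_surj[OF local h h_surj] emb_dim_le_if_surj[OF local(2,1) g g_surj]
    by (rule antisym)
  ultimately show ?thesis
    using regular local(2) unfolding regular_local_ring_def by simp
qed

section \<open>Minimal bases and Nakayama's lemma\<close>

lemma minimal_basis_iff:
  fixes R (structure)
  assumes "ring R" and gen: "generates R T I"
  shows "minimal_basis R I T \<longleftrightarrow> (\<forall>t\<in>T. t \<notin> Idl (T - {t}))"
proof -
  interpret ring R by fact
  have T: "T \<subseteq> carrier R" "Idl T = I" using gen unfolding generates_def by auto
  have "t \<notin> Idl (T - {t})" if minimal: "minimal_basis R I T" and t: "t \<in> T" for t
  proof
    assume "t \<in> Idl (T - {t})"
    then have "T \<subseteq> Idl (T - {t})" using genideal_self[of "T - {t}"] T(1) by blast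
    then have "Idl T \<subseteq> Idl (T - {t})"
      using genideal_minimal[OF genideal_ideal[of "T - {t}"]] T(1) by blast
    moreover have "Idl (T - {t}) \<subseteq> Idl T" using subset_Idl_subset[OF T(1)] by blast
    ultimately have "Idl (T - {t}) = I" using T(2) by blast
    moreover have "T - {t} \<subset> T" using t by blast
    ultimately show False using minimal unfolding minimal_basis_def by blast
  qed
  moreover have "minimal_basis R I T" if independent: "\<forall>t\<in>T. t \<notin> Idl (T - {t})"
    unfolding minimal_basis_def
  proof (intro conjI allI impI gen)
    fix T' assume "T' \<subset> T"
    then obtain t where t: "t \<in> T" "T' \<subseteq> T - {t}" by blast
    have "t \<in> I" using genideal_self[OF T(1)] T(2) t(1) by blast
    moreover have "Idl T' \<subseteq> Idl (T - {t})" using subset_Idl_subset[of "T - {t}" T'] T(1) t(2) by blast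
    ultimately show "Idl T' \<noteq> I" using independent t(1) by blast
  qed
  ultimately show ?thesis by blast
qed

lemma (in cring) ideal_prod_cgenideal_subset:
  assumes I: "ideal I R" and s: "s \<in> carrier R"
  shows "I \<cdot> (PIdl s) \<subseteq> I #> s"
proof
  fix x assume "x \<in> I \<cdot> (PIdl s)"
  then show "x \<in> I #> s"
  proof (induction x rule: ideal_prod.induct)
    case (prod i p)
    then obtain y where y: "y \<in> carrier R" "p = y \<otimes> s" unfolding cgenideal_def by blast
    have "i \<otimes> p = (i \<otimes> y) \<otimes> s" using y s ideal.Icarr[OF I prod(1)] by (simp add: m_assoc)
    moreover have "i \<otimes> y \<in> I" using ideal.I_r_closed[OF I prod(1) y(1)] .
    ultimately show ?case unfolding r_coset_def by blast
  next
    case (sum x1 x2)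
    then obtain c1 c2 where c: "c1 \<in> I" "x1 = c1 \<otimes> s" "c2 \<in> I" "x2 = c2 \<otimes> s"
      unfolding r_coset_def by blast
    then have "x1 \<oplus> x2 = (c1 \<oplus> c2) \<otimes> s" using s ideal.Icarr[OF I] by (simp add: l_distr)
    moreover have "c1 \<oplus> c2 \<in> I" using additive_subgroup.a_closed[OF ideal.axioms(1)[OF I] c(1,3)] .
    ultimately show ?case unfolding r_coset_def by blast
  qed
qed

lemma (in cring) ideal_prod_subset_add_cgenideal:
  assumes I: "ideal I R" and J: "ideal J R" and s: "s \<in> carrier R"
    and L: "L \<subseteq> J <+>\<^bsub>R\<^esub> PIdl s"
  shows "I \<cdot> L \<subseteq> J <+>\<^bsub>R\<^esub> I \<cdot> (PIdl s)"
proof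
  have K: "ideal (J <+>\<^bsub>R\<^esub> I \<cdot> (PIdl s)) R"
    using add_ideals[OF J ideal_prod_is_ideal[OF I cgenideal_ideal[OF s]]] .
  fix x assume "x \<in> I \<cdot> L"
  then show "x \<in> J <+>\<^bsub>R\<^esub> I \<cdot> (PIdl s)"
  proof (induction x rule: ideal_prod.induct)
    case (prod a b)
    then obtain j p where jp: "j \<in> J" "p \<in> PIdl s" "b = j \<oplus> p"
      using L unfolding set_add_def' by blast
    have a: "a \<in> carrier R" using ideal.Icarr[OF I prod(1)] .
    have "a \<otimes> b = a \<otimes> j \<oplus> a \<otimes> p"
      using jp a ideal.Icarr[OF J] ideal.Icarr[OF cgenideal_ideal[OF s]] by (simp add: r_distr)
    moreover have "a \<otimes> j \<in> J" using ideal.I_l_closed[OF J jp(1) a] .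
    moreover have "a \<otimes> p \<in> I \<cdot> (PIdl s)" using prod(1) jp(2) by (rule ideal_prod.prod)
    ultimately show ?case unfolding set_add_def' by blast
  next
    case (sum x1 x2)
    then show ?case using additive_subgroup.a_closed[OF ideal.axioms(1)[OF K]] by blast
  qed
qed

lemma one_minus_Units_if_in_max_ideal:
  fixes R (structure)
  assumes local: "local_ring R" and c: "c \<in> max_ideal R"
  shows "\<one> \<ominus> c \<in> Units R"
proof -
  interpret cring R using local by (rule local_ring_cring)
  have c_carr: "c \<in> carrier R" using max_ideal_subset_carrier[OF local] c by blast
  have "\<one> \<ominus> c \<notin> max_ideal R"
  proof
    assume "\<one> \<ominus> c \<in> max_ideal R"
    then have "(\<one> \<ominus> c) \<oplus> c \<in> max_ideal R"
      using additive_subgroup.a_closed[OF ideal.axioms(1)[OF ideal_max_ideal[OF local]] _ c] by blast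
    moreover have "(\<one> \<ominus> c) \<oplus> c = \<one>" using c_carr by algebra
    ultimately show False using one_not_in_max_ideal[OF local] by simp
  qed
  then show ?thesis using Units_if_not_in_max_ideal[OF local] c_carr by simp
qed

text \<open>From \<open>m \<subseteq> J + (s)\<close> we get \<open>m\<^sup>2 \<subseteq> J + m s\<close>, so \<open>s \<in> J + m\<^sup>2\<close> gives
  \<open>(1 - c) s \<in> J\<close> for some \<open>c \<in> m\<close>, and \<open>1 - c\<close> is a unit.\<close>

lemma nakayama_mem_ideal:
  fixes R (structure)
  assumes local: "local_ring R" and J: "ideal J R" and s: "s \<in> carrier R"
    and max_sub: "max_ideal R \<subseteq> J <+>\<^bsub>R\<^esub> PIdl s"
    and s_mem: "s \<in> J <+>\<^bsub>R\<^esub> max_ideal R \<cdot> max_ideal R"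
  shows "s \<in> J"
proof -
  interpret cring R using local by (rule local_ring_cring)
  let ?m = "max_ideal R"
  have m: "ideal ?m R" using local by (rule ideal_max_ideal)
  obtain j0 t where j0: "j0 \<in> J" and t: "t \<in> ?m \<cdot> ?m" and s_decomp: "s = j0 \<oplus> t"
    using s_mem unfolding set_add_def' by blast
  obtain j1 u where j1: "j1 \<in> J" and u: "u \<in> ?m \<cdot> (PIdl s)" and t_decomp: "t = j1 \<oplus> u"
    using ideal_prod_subset_add_cgenideal[OF m J s max_sub] t unfolding set_add_def' by blast
  obtain c where c: "c \<in> ?m" and u_eq: "u = c \<otimes> s"
    using ideal_prod_cgenideal_subset[OF m s] u unfolding r_coset_def by blast
  define j where "j = j0 \<oplus> j1"
  have j: "j \<in> J" unfolding j_def using additive_subgroup.a_closed[OF ideal.axioms(1)[OF J] j0 j1] .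
  have c_carr: "c \<in> carrier R" and j_carr: "j \<in> carrier R"
    using ideal.Icarr[OF m c] ideal.Icarr[OF J j] by auto
  have "s = j0 \<oplus> (j1 \<oplus> c \<otimes> s)"
    by (simp only: s_decomp[symmetric] t_decomp[symmetric] u_eq[symmetric])
  also have "\<dots> = j \<oplus> c \<otimes> s"
    unfolding j_def using ideal.Icarr[OF J j0] ideal.Icarr[OF J j1] c_carr s by (simp add: a_assoc)
  finally have s_eq: "s = j \<oplus> c \<otimes> s" .
  have "(\<one> \<ominus> c) \<otimes> s = (j \<oplus> c \<otimes> s) \<ominus> c \<otimes> s" using c_carr s s_eq by algebra
  also have "\<dots> = j" using c_carr s j_carr by algebra
  finally have unit_mult: "(\<one> \<ominus> c) \<otimes> s = j" .
  have unit: "\<one> \<ominus> c \<in> Units R" using one_minus_Units_if_in_max_ideal[OF local c] .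
  have "s = inv (\<one> \<ominus> c) \<otimes> ((\<one> \<ominus> c) \<otimes> s)"
    using m_assoc[OF Units_inv_closed[OF unit] Units_closed[OF unit] s] Units_l_inv[OF unit] s
    by simp
  also have "\<dots> \<in> J" using ideal.I_l_closed[OF J j[folded unit_mult]] unit by simp
  finally show ?thesis .
qed

lemma minimal_basis_not_mem_add_max_ideal_sq:
  fixes R (structure)
  assumes local: "local_ring R" and S: "minimal_basis R (max_ideal R) S" and s: "s \<in> S"
  shows "s \<notin> Idl (S - {s}) <+>\<^bsub>R\<^esub> max_ideal R \<cdot> max_ideal R"
proof
  assume s_mem: "s \<in> Idl (S - {s}) <+>\<^bsub>R\<^esub> max_ideal R \<cdot> max_ideal R"
  interpret cring R using local by (rule local_ring_cring)
  have S_carr: "S \<subseteq> carrier R" and gen: "Idl S = max_ideal R"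
    using S unfolding minimal_basis_def generates_def by auto
  then have s_carr: "s \<in> carrier R" using s by blast
  let ?J = "Idl (S - {s})"
  have J: "ideal ?J R" using S_carr by (intro genideal_ideal) blast
  have K: "ideal (?J <+>\<^bsub>R\<^esub> PIdl s) R" using add_ideals[OF J cgenideal_ideal[OF s_carr]] .
  have "S \<subseteq> ?J <+>\<^bsub>R\<^esub> PIdl s"
  proof
    fix t assume t: "t \<in> S"
    have zero_J: "\<zero> \<in> ?J" and zero_P: "\<zero> \<in> PIdl s"
      using additive_subgroup.zero_closed[OF ideal.axioms(1)[OF J]]
        additive_subgroup.zero_closed[OF ideal.axioms(1)[OF cgenideal_ideal[OF s_carr]]] by auto
    show "t \<in> ?J <+>\<^bsub>R\<^esub> PIdl s"
    proof (cases "t = s")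
      case True
      then have "t = \<zero> \<oplus> s" using s_carr by simp
      with zero_J cgenideal_self[OF s_carr] show ?thesis unfolding set_add_def' by blast
    next
      case False
      then have "t \<in> ?J" using genideal_self[of "S - {s}"] S_carr t by blast
      moreover have "t = t \<oplus> \<zero>" using S_carr t by auto
      ultimately show ?thesis using zero_P unfolding set_add_def' by blast
    qed
  qed
  then have "max_ideal R \<subseteq> ?J <+>\<^bsub>R\<^esub> PIdl s" unfolding gen[symmetric] by (rule genideal_minimal[OF K])
  then have "s \<in> ?J" by (rule nakayama_mem_ideal[OF local J s_carr _ s_mem])
  with s S show False
    using minimal_basis_iff[OF ring_axioms] unfolding minimal_basis_def by blast
qed

lemma img_minimal_basis_not_mem_genideal:
  fixes Q :: "('a, 'c) ring_scheme" and A :: "('b, 'd) ring_scheme"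
  assumes local: "local_ring Q" and h: "ring_hom_ring Q A \<pi>"
    and surj: "\<pi> ` carrier Q = carrier A"
    and ker: "a_kernel Q A \<pi> \<subseteq> max_ideal Q \<cdot>\<^bsub>Q\<^esub> max_ideal Q"
    and S: "minimal_basis Q (max_ideal Q) S" and s: "s \<in> S"
  shows "\<pi> s \<notin> Idl\<^bsub>A\<^esub> (\<pi> ` (S - {s}))"
proof
  interpret ring_hom_ring Q A \<pi> by (rule h)
  assume "\<pi> s \<in> Idl\<^bsub>A\<^esub> (\<pi> ` (S - {s}))"
  moreover have S_carr: "S - {s} \<subseteq> carrier Q" "s \<in> carrier Q"
    using S s unfolding minimal_basis_def generates_def by auto
  ultimately obtain j where j: "j \<in> Idl\<^bsub>Q\<^esub> (S - {s})" "\<pi> s = \<pi> j"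
    using genideal_img_if_surj[OF surj S_carr(1)] by auto
  have j_carr: "j \<in> carrier Q" using ideal.Icarr[OF R.genideal_ideal[OF S_carr(1)] j(1)] .
  have "\<pi> (s \<ominus>\<^bsub>Q\<^esub> j) = \<zero>\<^bsub>A\<^esub>" using j_carr S_carr(2) j(2) by (simp add: a_minus_def S.r_neg)
  then have "s \<ominus>\<^bsub>Q\<^esub> j \<in> max_ideal Q \<cdot>\<^bsub>Q\<^esub> max_ideal Q"
    using ker j_carr S_carr(2) unfolding a_kernel_def' by auto
  moreover have "s = j \<oplus>\<^bsub>Q\<^esub> (s \<ominus>\<^bsub>Q\<^esub> j)" using j_carr S_carr(2) by algebra
  ultimately have "s \<in> Idl\<^bsub>Q\<^esub> (S - {s}) <+>\<^bsub>Q\<^esub> max_ideal Q \<cdot>\<^bsub>Q\<^esub> max_ideal Q"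
    using j(1) unfolding set_add_def' by blast
  with minimal_basis_not_mem_add_max_ideal_sq[OF local S s] show False by contradiction
qed

lemma basically_regular_if_surj_ker_subset_sq:
  fixes Q :: "('a, 'c) ring_scheme" and A :: "('b, 'd) ring_scheme"
  assumes local: "local_ring Q" "local_ring A" and hom: "\<pi> \<in> ring_hom Q A"
    and surj: "\<pi> ` carrier Q = carrier A"
    and ker: "a_kernel Q A \<pi> \<subseteq> max_ideal Q \<cdot>\<^bsub>Q\<^esub> max_ideal Q"
  shows "basically_regular Q A \<pi>"
proof -
  have h: "ring_hom_ring Q A \<pi>" using ring_hom_ring_if_local_rings[OF local hom] .
  interpret ring_hom_ring Q A \<pi> by (rule h)
  have img: "\<pi> ` max_ideal Q = max_ideal A" using img_max_ideal_if_surj[OF local h surj] .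
  have "inj_on \<pi> S \<and> minimal_basis A (max_ideal A) (\<pi> ` S)"
    if S: "minimal_basis Q (max_ideal Q) S" for S
  proof
    have S_fin: "finite S" and S_carr: "S \<subseteq> carrier Q" and gen: "Idl\<^bsub>Q\<^esub> S = max_ideal Q"
      using S unfolding minimal_basis_def generates_def by auto
    note not_mem = img_minimal_basis_not_mem_genideal[OF local(1) h surj ker S]
    show inj: "inj_on \<pi> S"
    proof (rule inj_onI, rule ccontr)
      fix x y assume xy: "x \<in> S" "y \<in> S" "\<pi> x = \<pi> y" "x \<noteq> y"
      then have "\<pi> x \<in> \<pi> ` (S - {x})" by auto
      moreover have "\<pi> ` (S - {x}) \<subseteq> carrier A" using S_carr by auto
      ultimately show False using not_mem[OF xy(1)] S.genideal_self by blast
    qed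
    have gen_A: "generates A (\<pi> ` S) (max_ideal A)"
      using S_fin S_carr genideal_img_if_surj[OF surj S_carr] gen img
      unfolding generates_def by auto
    have "\<pi> ` S - {\<pi> s} = \<pi> ` (S - {s})" if "s \<in> S" for s
      using inj_on_image_set_diff[OF inj, of S "{s}"] that by simp
    then show "minimal_basis A (max_ideal A) (\<pi> ` S)"
      using minimal_basis_iff[OF S.ring_axioms gen_A] not_mem by auto
  qed
  then show ?thesis unfolding basically_regular_def using local hom img by blast
qed

section \<open>Flat local homomorphisms\<close>

lemma (in ring) finsum_mem_ideal:
  assumes I: "ideal I R" and "finite A" "g ` A \<subseteq> I"
  shows "(\<Oplus>i\<in>A. g i) \<in> I"
  using assms(2,3)
proof (induction A rule: finite_induct)
  case empty
  then show ?case using additive_subgroup.zero_closed[OF ideal.axioms(1)[OF I]] by simp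
next
  case (insert a A)
  then have "g \<in> A \<rightarrow> carrier R" "g a \<in> carrier R" using ideal.Icarr[OF I] by auto
  with insert show ?case
    using additive_subgroup.a_closed[OF ideal.axioms(1)[OF I]] by (simp add: finsum_insert)
qed

lemma inj_if_flat_local_hom:
  fixes Q :: "('a, 'c) ring_scheme" and A :: "('b, 'd) ring_scheme"
  assumes local: "local_ring Q" "local_ring A" and hom: "\<pi> \<in> ring_hom Q A"
    and local_hom: "\<pi> ` max_ideal Q \<subseteq> max_ideal A" and flat: "flat_hom Q A \<pi>"
  shows "inj_on \<pi> (carrier Q)"
proof -
  interpret ring_hom_ring Q A \<pi> using ring_hom_ring_if_local_rings[OF local hom] .
  have "q = \<zero>\<^bsub>Q\<^esub>" if q: "q \<in> carrier Q" "\<pi> q = \<zero>\<^bsub>A\<^esub>" for q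
  proof -
    have "(\<Oplus>\<^bsub>A\<^esub> i\<in>{..<1}. \<pi> q \<otimes>\<^bsub>A\<^esub> \<one>\<^bsub>A\<^esub>) = \<zero>\<^bsub>A\<^esub>" using q by simp
    then obtain m and a :: "nat \<Rightarrow> nat \<Rightarrow> 'a" and y :: "nat \<Rightarrow> 'b"
      where y: "y ` {..<m} \<subseteq> carrier A" and a: "\<forall>j<m. a 0 j \<in> carrier Q"
        and one: "\<one>\<^bsub>A\<^esub> = (\<Oplus>\<^bsub>A\<^esub> j\<in>{..<m}. \<pi> (a 0 j) \<otimes>\<^bsub>A\<^esub> y j)"
        and rel: "\<forall>j<m. q \<otimes>\<^bsub>Q\<^esub> a 0 j = \<zero>\<^bsub>Q\<^esub>"
      using flat[unfolded flat_hom_def, rule_format, where n = 1 and f = "\<lambda>_. q" and x = "\<lambda>_. \<one>\<^bsub>A\<^esub>"] q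
      by (auto simp: lessThan_Suc R.finsum_insert)
    have "\<exists>j<m. a 0 j \<notin> max_ideal Q"
    proof (rule ccontr)
      assume "\<not> ?thesis"
      then have "\<pi> (a 0 j) \<otimes>\<^bsub>A\<^esub> y j \<in> max_ideal A" if "j < m" for j
        using local_hom y ideal.I_r_closed[OF ideal_max_ideal[OF local(2)]] that by blast
      then have "\<one>\<^bsub>A\<^esub> \<in> max_ideal A"
        unfolding one by (intro S.finsum_mem_ideal[OF ideal_max_ideal[OF local(2)]]) auto
      with one_not_in_max_ideal[OF local(2)] show False by contradiction
    qed
    then obtain j where j: "j < m" "a 0 j \<notin> max_ideal Q" by blast
    with a have unit: "a 0 j \<in> Units Q" using Units_if_not_in_max_ideal[OF local(1)] by blast
    have "q = (q \<otimes>\<^bsub>Q\<^esub> a 0 j) \<otimes>\<^bsub>Q\<^esub> inv\<^bsub>Q\<^esub> (a 0 j)"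
      using R.m_assoc[OF q(1) R.Units_closed[OF unit] R.Units_inv_closed[OF unit]]
        R.Units_r_inv[OF unit] q(1) by simp
    also have "\<dots> = \<zero>\<^bsub>Q\<^esub>" using rel j(1) R.Units_inv_closed[OF unit] by simp
    finally show ?thesis .
  qed
  then have "a_kernel Q A \<pi> = {\<zero>\<^bsub>Q\<^esub>}" unfolding a_kernel_def' by auto
  then show ?thesis by (rule trivial_ker_imp_inj)
qed

theorem corollary4p3:
  fixes A :: "'a ring" and Q :: "'b ring" and \<pi> :: "'b \<Rightarrow> 'a"
  assumes "complete_local_ring A"
    and "\<not> regular_local_ring A"
    and "minimal_cohen_presentation Q A \<pi>"
  shows "basically_regular Q A \<pi> \<and> \<not> flat_hom Q A \<pi>"
proof
  have local: "local_ring Q" "local_ring A" and regular_Q: "regular_local_ring Q"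
    and hom: "\<pi> \<in> ring_hom Q A" and surj: "\<pi> ` carrier Q = carrier A"
    and ker: "a_kernel Q A \<pi> \<subseteq> max_ideal Q \<cdot>\<^bsub>Q\<^esub> max_ideal Q"
    using assms(1,3)
    unfolding minimal_cohen_presentation_def cohen_presentation_def complete_local_ring_def
    by auto
  show "basically_regular Q A \<pi>"
    using basically_regular_if_surj_ker_subset_sq[OF local hom surj ker] .
  show "\<not> flat_hom Q A \<pi>"
  proof
    assume flat: "flat_hom Q A \<pi>"
    have "\<pi> ` max_ideal Q = max_ideal A"
      using img_max_ideal_if_surj[OF local ring_hom_ring_if_local_rings[OF local hom] surj] .
    then have "inj_on \<pi> (carrier Q)" using inj_if_flat_local_hom[OF local hom _ flat] by simp
    with hom surj have "\<pi> \<in> ring_iso Q A" unfolding ring_iso_def bij_betw_def by simp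
    with assms(2) show False using regular_local_ring_if_ring_iso[OF local _ regular_Q] by blast
  qed
qed

end
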